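(* Let $n$ be a positive integer and $x\in\Gamma_n$. Then \[ \xi_n\bigl(\sigma_{\mathrm{RF}}(x)\bigr)=n-\tfrac12+\tfrac12\,\#_{\mathrm{dl}}(x)+\tfrac12\,W_{\mathrm{tot}}(G_x). \]
   Context: Let $[n]=\{1,\dots,n\}$. $\Gamma_n$ is the set of words $x=(x_1,\dots,x_{2n})\in[n]^{2n}$ in which every symbol of $[n]$ occurs exactly twice. Colours are formal symbols $r,b$. $[\,\cdot\,]$ is the Iverson bracket. For $f\in\{r,b\}^{2n}$, $\xi_n(f)=\sum_{i=1}^{2n-1}[f_i\neq f_{i+1}]$. The red-first colouring $\sigma_{\mathrm{RF}}(x)$ has $i$-th entry $r$ if $x_i\notin\{x_1,\dots,x_{i-1}\}$ and $b$ otherwise. For $i\in[2n-1]$, $\eta(x,i)=[x_{i+1}\in\{x_1,\dots,x_i\}]\oplus[x_i\in\{x_1,\dots,x_{i-1}\}]$. For $e\subseteq[n]$, $\theta_x(e)=-\sum_{i=1}^{2n-1}(-1)^{\eta(x,i)}\delta_{e,\{x_i,x_{i+1}\}}$. The BPSP graph $G_x=(V_x,E_x,W_x)$ has $V_x=[n]$, $E_x=\{\{x_i,x_{i+1}\}: i\in[2n-1],\ x_i\neq x_{i+1},\ \theta_x(\{x_i,x_{i+1}\})\neq0\}$, $W_x=\theta_x|_{E_x}$; $W_{\mathrm{tot}}(G_x)=\sum_{e\in E_x}W_x(e)$. $\#_{\mathrm{dl}}(x)=|\{i\in[2n-1]:x_i=x_{i+1}\}|$. *)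

theory Defs
  imports Complex_Main
begin

(* Words are lists of length 2n; list index j (0-based) corresponds to paper index j+1. *)

definition Gamma :: "nat \<Rightarrow> nat list set" where
  "Gamma n = {x. length x = 2 * n \<and> (\<forall>a\<in>{1..n}. count_list x a = 2) \<and> set x \<subseteq> {1..n}}"

datatype colour = r | b

definition xi :: "colour list \<Rightarrow> nat" where
  "xi f = card {i. i + 1 < length f \<and> f ! i \<noteq> f ! (i + 1)}"

definition sigma_RF :: "nat list \<Rightarrow> colour list" where
  "sigma_RF x = map (\<lambda>i. if x ! i \<notin> set (take i x) then r else b) [0..<length x]"

definition eta :: "nat list \<Rightarrow> nat \<Rightarrow> bool" where
  "eta x j = ((x ! (j + 1) \<in> set (take (j + 1) x)) \<noteq> (x ! j \<in> set (take j x)))"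

definition theta :: "nat list \<Rightarrow> nat set \<Rightarrow> int" where
  "theta x e = - (\<Sum>j<length x - 1. (if eta x j then -1 else 1) *
                    (if e = {x ! j, x ! (j + 1)} then 1 else 0))"

definition bpsp_vertices :: "nat \<Rightarrow> nat set" where
  "bpsp_vertices n = {1..n}"

definition bpsp_edges :: "nat list \<Rightarrow> nat set set" where
  "bpsp_edges x = {{x ! j, x ! (j + 1)} | j. j < length x - 1 \<and> x ! j \<noteq> x ! (j + 1)
                     \<and> theta x {x ! j, x ! (j + 1)} \<noteq> 0}"

definition bpsp_weight :: "nat list \<Rightarrow> nat set \<Rightarrow> int" where
  "bpsp_weight x e = theta x e"

definition W_tot :: "nat list \<Rightarrow> int" where
  "W_tot x = (\<Sum>e\<in>bpsp_edges x. bpsp_weight x e)"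

definition num_dl :: "nat list \<Rightarrow> nat" where
  "num_dl x = card {j. j < length x - 1 \<and> x ! j = x ! (j + 1)}"

end

theory Submission
  imports Defs
begin

(* Among the 2n - 1 adjacent positions j of x, the colouring sigma_RF changes exactly where eta x j
   holds.  This is always the case at a doubled letter, whose first copy is immediately followed by
   its second.  Every other position carries a genuine edge {x_j, x_(j+1)}, and the weights theta
   add up, over these positions, +1 for a colour change and -1 otherwise.  Hence W_tot is the number
   of undoubled colour changes minus the number of undoubled non-changes, and adding the number of
   positions, 2n - 1 = #undoubled + #dl, gives twice the number of colour changes. *)

lemma xi_sigma_RF_eq_card_eta:
  "xi (sigma_RF x) = card {j. j < length x - 1 \<and> eta x j}"
proof -
  have "{i. i + 1 < length (sigma_RF x) \<and> sigma_RF x ! i \<noteq> sigma_RF x ! (i + 1)}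
        = {j. j < length x - 1 \<and> eta x j}"
    by (auto simp: sigma_RF_def eta_def split: if_splits)
  then show ?thesis by (simp add: xi_def)
qed

lemma eta_if_doubled_letter:
  assumes "count_list x (x ! j) \<le> 2" and "j + 1 < length x" and "x ! j = x ! (j + 1)"
  shows "eta x j"
proof -
  let ?a = "x ! j"
  have "drop j x = ?a # ?a # drop (j + 2) x"
    using assms(2,3) by (metis Cons_nth_drop_Suc Suc_eq_plus1 add_Suc_right one_add_one Suc_lessD)
  then have "count_list x ?a = count_list (take j x) ?a + 2 + count_list (drop (j + 2) x) ?a"
    by (metis append_take_drop_id count_list_append count_list.simps(2) add.assoc
        add.commute one_add_one plus_1_eq_Suc)
  then have "?a \<notin> set (take j x)"
    using assms(1) by (simp add: count_list_0_iff[symmetric])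
  moreover have "x ! (j + 1) \<in> set (take (j + 1) x)"
    using assms(2,3) by (simp add: in_set_conv_nth) (metis lessI nth_take)
  ultimately show ?thesis unfolding eta_def by simp
qed

lemma W_tot_eq_sum_undoubled_positions:
  "W_tot x = (\<Sum>j | j < length x - 1 \<and> x ! j \<noteq> x ! (j + 1). if eta x j then 1 else -1)"
proof -
  define m where "m = length x - 1"
  define pair where "pair j = {x ! j, x ! (j + 1)}" for j
  define D where "D = {j. j < m \<and> x ! j \<noteq> x ! (j + 1)}"
  define sgn where "sgn j = (if eta x j then 1 else -1 :: int)" for j
  have fin_D: "finite D" unfolding D_def by simp
  have undoubled_if_same_pair: "j \<in> D" if "k \<in> D" "j < m" "pair j = pair k" for j k
    using that unfolding D_def pair_def by (auto simp: doubleton_eq_iff)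
  have theta_fibre: "theta x (pair k) = (\<Sum>j | j \<in> D \<and> pair j = pair k. sgn j)" if "k \<in> D" for k
  proof -
    have "theta x (pair k) = (\<Sum>j<m. if pair j = pair k then sgn j else 0)"
      unfolding theta_def m_def pair_def sgn_def by (auto simp: sum_negf[symmetric] intro!: sum.cong)
    also have "\<dots> = (\<Sum>j | j < m \<and> pair j = pair k. sgn j)"
      by (simp add: sum.inter_filter[symmetric] Int_def conj_commute)
    also have "{j. j < m \<and> pair j = pair k} = {j. j \<in> D \<and> pair j = pair k}"
      using undoubled_if_same_pair[OF that] unfolding D_def by blast
    finally show ?thesis .
  qed
  have edges_sub: "bpsp_edges x \<subseteq> pair ` D"
    unfolding bpsp_edges_def pair_def D_def m_def by auto
  have "W_tot x = (\<Sum>e\<in>pair ` D. theta x e)"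
    unfolding W_tot_def bpsp_weight_def
    by (rule sum.mono_neutral_left[OF finite_imageI[OF fin_D] edges_sub])
       (auto simp: bpsp_edges_def pair_def D_def m_def)
  also have "\<dots> = (\<Sum>e\<in>pair ` D. \<Sum>j | j \<in> D \<and> pair j = e. sgn j)"
    using theta_fibre by (auto intro!: sum.cong)
  also have "\<dots> = (\<Sum>j\<in>D. sgn j)"
    by (rule sum.group[OF fin_D finite_imageI[OF fin_D] subset_refl])
  finally show ?thesis unfolding D_def m_def sgn_def .
qed

lemma twice_xi_sigma_RF:
  assumes "\<And>a. count_list x a \<le> 2"
  shows "2 * int (xi (sigma_RF x)) = int (length x - 1) + int (num_dl x) + W_tot x"
proof -
  define P where "P = {j. j < length x - 1}"
  define D where "D = {j \<in> P. x ! j \<noteq> x ! (j + 1)}"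
  define L where "L = {j \<in> P. x ! j = x ! (j + 1)}"
  define E where "E = {j \<in> P. eta x j}"
  have fin: "finite P" "finite D" "finite L" unfolding P_def D_def L_def by auto
  have "L \<subseteq> E"
    using eta_if_doubled_letter[OF assms] unfolding L_def E_def P_def by auto
  then have E_split: "E = (D \<inter> E) \<union> L" and "D \<inter> L = {}"
    unfolding D_def L_def E_def by auto
  have P_split: "P = D \<union> L" unfolding D_def L_def by auto
  have "card L = num_dl x" unfolding num_dl_def L_def P_def by simp
  have "xi (sigma_RF x) = card E"
    unfolding xi_sigma_RF_eq_card_eta E_def P_def by simp
  also have "\<dots> = card (D \<inter> E) + num_dl x"
    using E_split card_Un_disjoint[of "D \<inter> E" L] fin \<open>D \<inter> L = {}\<close> \<open>card L = num_dl x\<close>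
    by auto
  finally have "xi (sigma_RF x) = card (D \<inter> E) + num_dl x" .
  moreover have "length x - 1 = card (D \<inter> E) + card (D - E) + num_dl x"
  proof -
    have "length x - 1 = card P" unfolding P_def by simp
    also have "\<dots> = card D + card L"
      using fin \<open>D \<inter> L = {}\<close> by (simp add: P_split card_Un_disjoint)
    also have "card D = card (D \<inter> E) + card (D - E)"
      using fin by (simp add: card_Int_Diff)
    finally show ?thesis using \<open>card L = num_dl x\<close> by simp
  qed
  moreover have "W_tot x = int (card (D \<inter> E)) - int (card (D - E))"
  proof -
    have "D \<inter> {j. eta x j} = D \<inter> E" "D \<inter> - {j. eta x j} = D - E"
      unfolding D_def E_def by auto
    moreover have "W_tot x = (\<Sum>j\<in>D. if eta x j then 1 else -1)"
      unfolding W_tot_eq_sum_undoubled_positions D_def P_def by simp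
    ultimately show ?thesis
      by (simp add: sum.If_cases[OF fin(2)])
  qed
  ultimately show ?thesis by simp
qed

theorem corollary1:
  fixes n :: nat and x :: "nat list"
  assumes "n > 0" and "x \<in> Gamma n"
  shows "real (xi (sigma_RF x)) = real n - 1/2 + (1/2) * real (num_dl x) + (1/2) * real_of_int (W_tot x)"
proof -
  have "count_list x a \<le> 2" for a
  proof (cases "a \<in> set x")
    case True
    then show ?thesis using assms(2) unfolding Gamma_def by auto
  next
    case False
    then show ?thesis by (simp add: count_list_0_iff[symmetric])
  qed
  then have "2 * int (xi (sigma_RF x)) = int (length x - 1) + int (num_dl x) + W_tot x"
    by (rule twice_xi_sigma_RF)
  also have "int (length x - 1) = 2 * int n - 1"
    using assms unfolding Gamma_def by auto
  finally have "real_of_int (2 * int (xi (sigma_RF x))) = real_of_int (2 * int n - 1 + int (num_dl x) + W_tot x)"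
    by (rule arg_cong)
  then show ?thesis by simp
qed

end
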